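(* Let $\alpha$ be a badly approximable real number, i.e. $\inf_{q\ge1} q\,\|q\alpha\|>0$. There exists a constant $C(\alpha)>0$ such that for every integer $q\ge2$, $$\sum_{x=q}^{q^3}\frac{1}{\|\alpha x\|\,x\,(\log_2 x)^2}\le C(\alpha).$$
   Context: For a real number $x$, $\|x\|$ denotes the distance from $x$ to the nearest integer; $\log_2$ denotes the logarithm in base $2$. *)

theory Defs
  imports "HOL-Analysis.Analysis"
begin

definition dist_int :: "real \<Rightarrow> real" where
  "dist_int x = min (x - of_int \<lfloor>x\<rfloor>) (of_int \<lceil>x\<rceil> - x)"

end

theory Submission
  imports Defs "HOL-Library.Discrete_Functions" "HOL-Analysis.Harmonic_Numbers"
begin

(* Let c > 0 with n * ||n alpha|| >= c for all n >= 1.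
   1. For x <> y in a dyadic block [N, 2N) we have |x - y| < N, hence
      ||(x - y) alpha|| >= c / N.  Splitting the block according to whether
      alpha x lies just above or just below its nearest integer, the values
      ||alpha x|| in each half are pairwise (c/N)-separated points of
      [c/(4N), 1/2].  Such a configuration has sum of reciprocals
      O((N/c) log(N/c)) (comparison with a harmonic sum), which for N = 2^k
      gives  sum_{2^k <= x < 2^(k+1)} 1/||alpha x|| <= E 2^k k  with E
      depending only on c.
   2. On that block 1/(x (log2 x)^2) <= 1/(2^k k^2), so the block
      contributes at most E/k to the sum of the theorem.
   3. The range q..q^3 meets only the 2K+3 blocks k = K, ..., 3K+2 with
      K = floor(log2 q) >= 1, each contributing at most E/K; the total is at
      most 5E, independently of q. *)

lemma dist_int_nonneg: "dist_int y \<ge> 0"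
  unfolding dist_int_def by (simp add: le_of_int_ceiling)

lemma ceiling_le_floor_plus_one: "\<lceil>y::real\<rceil> \<le> \<lfloor>y\<rfloor> + 1"
  unfolding ceiling_le_iff using real_of_int_floor_add_one_gt[of y] by simp

lemma dist_int_le_half: "dist_int y \<le> 1/2"
proof -
  have "real_of_int \<lceil>y\<rceil> \<le> real_of_int \<lfloor>y\<rfloor> + 1"
    using ceiling_le_floor_plus_one[of y] by linarith
  then show ?thesis unfolding dist_int_def by linarith
qed

lemma dist_int_le: "dist_int y \<le> \<bar>y - of_int m\<bar>"
proof (cases "m \<le> \<lfloor>y\<rfloor>")
  case True
  then have "real_of_int m \<le> y" by linarith
  with True show ?thesis unfolding dist_int_def by linarith
next
  case False
  then have "\<lceil>y\<rceil> \<le> m" using ceiling_le_floor_plus_one[of y] by linarith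
  then have "of_int \<lceil>y\<rceil> \<le> real_of_int m" by linarith
  then show ?thesis unfolding dist_int_def by linarith
qed

lemma dist_int_minus: "dist_int (- y) = dist_int y"
  unfolding dist_int_def by (simp add: floor_minus ceiling_minus)

lemma dist_int_signed: "\<exists>\<epsilon>\<in>{1, -1}. \<exists>m. dist_int y = \<epsilon> * (y - of_int m)"
proof -
  have "dist_int y = y - of_int \<lfloor>y\<rfloor> \<or> dist_int y = of_int \<lceil>y\<rceil> - y"
    unfolding dist_int_def by linarith
  then show ?thesis
  proof
    assume "dist_int y = y - of_int \<lfloor>y\<rfloor>"
    then show ?thesis by (intro bexI[where x=1] exI[where x="\<lfloor>y\<rfloor>"]) auto
  next
    assume "dist_int y = of_int \<lceil>y\<rceil> - y"
    then show ?thesis by (intro bexI[where x="-1"] exI[where x="\<lceil>y\<rceil>"]) auto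
  qed
qed

lemma dist_int_diff_le:
  assumes "\<bar>\<epsilon>\<bar> = 1"
    and "dist_int a = \<epsilon> * (a - of_int m)" and "dist_int b = \<epsilon> * (b - of_int n)"
  shows "dist_int (a - b) \<le> \<bar>dist_int a - dist_int b\<bar>"
proof -
  have "dist_int a - dist_int b = \<epsilon> * ((a - b) - of_int (m - n))"
    using assms(2,3) by (simp add: algebra_simps)
  then have "\<bar>dist_int a - dist_int b\<bar> = \<bar>(a - b) - of_int (m - n)\<bar>"
    using assms(1) by (simp add: abs_mult)
  then show ?thesis using dist_int_le[of "a - b" "m - n"] by simp
qed

section \<open>Reciprocal sums over separated points\<close>

text \<open>Pairwise \<open>\<delta>\<close>-separated points of \<open>[\<delta>/2, 1/2]\<close> occupy distinct cells
  \<open>[j\<delta>, (j+1)\<delta>)\<close>, so the sum of their reciprocals is dominated by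
  \<open>2/\<delta> + \<Sum>j=1..M. 1/(j\<delta>)\<close> with \<open>M = \<lfloor>1/(2\<delta>)\<rfloor>\<close>.\<close>
lemma sum_inverse_separated:
  fixes S :: "'a set" and \<rho> :: "'a \<Rightarrow> real" and \<delta> :: real
  assumes dpos: "\<delta> > 0" and fin: "finite S"
    and bnd: "\<And>x. x \<in> S \<Longrightarrow> \<delta>/2 \<le> \<rho> x \<and> \<rho> x \<le> 1/2"
    and sep: "\<And>x y. x \<in> S \<Longrightarrow> y \<in> S \<Longrightarrow> x \<noteq> y \<Longrightarrow> \<delta> \<le> \<bar>\<rho> x - \<rho> y\<bar>"
  shows "(\<Sum>x\<in>S. 1 / \<rho> x) \<le> (2 + harm (nat \<lfloor>1/(2*\<delta>)\<rfloor>)) / \<delta>"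
proof -
  define cell where "cell x = nat \<lfloor>\<rho> x / \<delta>\<rfloor>" for x
  define M where "M = nat \<lfloor>1/(2*\<delta>)\<rfloor>"
  define G where "G j = (if j = 0 then 2/\<delta> else 1/(real j * \<delta>))" for j :: nat
  have ratio_nonneg: "\<rho> x / \<delta> \<ge> 0" if "x \<in> S" for x
    using bnd[OF that] dpos by auto
  have inj: "inj_on cell S"
  proof (rule inj_onI)
    fix x y assume xS: "x \<in> S" and yS: "y \<in> S" and "cell x = cell y"
    then have "\<lfloor>\<rho> x / \<delta>\<rfloor> = \<lfloor>\<rho> y / \<delta>\<rfloor>"
      using ratio_nonneg[OF xS] ratio_nonneg[OF yS] unfolding cell_def
      by (simp add: eq_nat_nat_iff)
    then have "\<bar>\<rho> x / \<delta> - \<rho> y / \<delta>\<bar> < 1" by linarith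
    then have "\<bar>\<rho> x - \<rho> y\<bar> < \<delta>"
      using dpos by (simp add: diff_divide_distrib[symmetric] divide_less_eq)
    then show "x = y" using sep xS yS by force
  qed
  have cells: "cell ` S \<subseteq> {0..M}"
  proof
    fix j assume "j \<in> cell ` S"
    then obtain x where xS: "x \<in> S" and j: "j = cell x" by auto
    have "\<rho> x / \<delta> \<le> (1/2) / \<delta>"
      using bnd[OF xS] dpos by (intro divide_right_mono) auto
    then have "\<rho> x / \<delta> \<le> 1/(2*\<delta>)" by simp
    then show "j \<in> {0..M}" unfolding j cell_def M_def by (simp add: floor_mono nat_mono)
  qed
  have cell_bound: "1 / \<rho> x \<le> G (cell x)" if xS: "x \<in> S" for x
  proof (cases "cell x = 0")
    case True
    have "1 / \<rho> x \<le> 1 / (\<delta>/2)" using bnd[OF xS] dpos by (intro divide_left_mono) auto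
    then show ?thesis using True by (simp add: G_def)
  next
    case False
    have "real (cell x) \<le> \<rho> x / \<delta>"
      using ratio_nonneg[OF xS] unfolding cell_def by simp
    then have "real (cell x) * \<delta> \<le> \<rho> x" using dpos by (simp add: le_divide_eq)
    moreover have "real (cell x) * \<delta> > 0" using False dpos by simp
    ultimately have "1 / \<rho> x \<le> 1 / (real (cell x) * \<delta>)" by (intro divide_left_mono) auto
    then show ?thesis using False by (simp add: G_def)
  qed
  have "(\<Sum>x\<in>S. 1 / \<rho> x) \<le> (\<Sum>x\<in>S. G (cell x))" by (intro sum_mono cell_bound)
  also have "\<dots> = (\<Sum>j\<in>cell ` S. G j)" by (simp add: sum.reindex[OF inj])
  also have "\<dots> \<le> (\<Sum>j\<in>{0..M}. G j)"
    using dpos by (intro sum_mono2 cells) (auto simp: G_def)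
  also have "\<dots> = G 0 + (\<Sum>j\<in>{1..M}. inverse (real j) / \<delta>)"
    by (simp add: sum.atLeast_Suc_atMost G_def field_simps)
  also have "\<dots> = (2 + harm M) / \<delta>"
    by (simp add: harm_def sum_divide_distrib G_def add_divide_distrib)
  finally show ?thesis by (simp add: M_def)
qed

lemma harm_le_ln: "harm n \<le> 1 + ln (real n + 1)"
proof -
  have "harm (Suc n) - ln (real (Suc n)) \<le> harm 1 - ln (real (1::nat))"
    by (rule euler_mascheroni_sequence_decreasing) auto
  then have "harm (Suc n) \<le> 1 + ln (real n + 1)" by (simp add: harm_def add.commute)
  moreover have "harm n \<le> (harm (Suc n) :: real)" by (simp add: harm_Suc)
  ultimately show ?thesis by linarith
qed

section \<open>Badly approximable numbers on a dyadic block\<close>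

definition badly_approximable_with :: "real \<Rightarrow> real \<Rightarrow> bool" where
  "badly_approximable_with c \<alpha> \<longleftrightarrow>
     c > 0 \<and> (\<forall>n::nat. 1 \<le> n \<longrightarrow> c \<le> real n * dist_int (real n * \<alpha>))"

lemma badly_approximable_withI:
  assumes "(INF q\<in>{1::nat..}. real q * dist_int (real q * \<alpha>)) > 0"
  shows "badly_approximable_with (INF q\<in>{1::nat..}. real q * dist_int (real q * \<alpha>)) \<alpha>"
proof -
  have "bdd_below ((\<lambda>q. real q * dist_int (real q * \<alpha>)) ` {1::nat..})"
    by (rule bdd_belowI2[where m=0]) (simp add: dist_int_nonneg)
  then have "(INF q\<in>{1::nat..}. real q * dist_int (real q * \<alpha>)) \<le> real n * dist_int (real n * \<alpha>)"
    if "1 \<le> n" for n :: nat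
    using that by (intro cINF_lower) simp_all
  then show ?thesis using assms unfolding badly_approximable_with_def by simp
qed

lemma badly_approximable_dist_int:
  assumes "badly_approximable_with c \<alpha>" and "n \<ge> 1"
  shows "c / real n \<le> dist_int (\<alpha> * real n)"
  using assms by (simp add: badly_approximable_with_def divide_le_eq mult.commute)

text \<open>Distinct points of a block \<open>[N, 2N)\<close> differ by less than \<open>N\<close>, so their
  multiples of \<open>\<alpha>\<close> are \<open>(c/N)\<close>-separated modulo 1.\<close>
lemma badly_approximable_block_separated:
  assumes ba: "badly_approximable_with c \<alpha>"
    and x: "x \<in> {N..<2*N}" and y: "y \<in> {N..<2*N}" and "x \<noteq> y"
  shows "c / real N \<le> dist_int (\<alpha> * (real x - real y))"
proof -
  have ordered: "c / real N \<le> dist_int (\<alpha> * (real a - real b))"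
    if "a \<in> {N..<2*N}" "b \<in> {N..<2*N}" "b < a" for a b
  proof -
    have "c / real N \<le> c / real (a - b)"
      using that ba by (intro divide_left_mono) (auto simp: badly_approximable_with_def)
    also have "\<dots> \<le> dist_int (\<alpha> * real (a - b))"
      using that by (intro badly_approximable_dist_int[OF ba]) auto
    finally show ?thesis using \<open>b < a\<close> by (simp add: of_nat_diff)
  qed
  show ?thesis
  proof (cases "y < x")
    case True with ordered x y show ?thesis by blast
  next
    case False
    with \<open>x \<noteq> y\<close> have "c / real N \<le> dist_int (- (\<alpha> * (real x - real y)))"
      using ordered[OF y x] by (simp add: algebra_simps)
    then show ?thesis by (simp add: dist_int_minus)
  qed
qed

text \<open>Points of a block \<open>[N, 2N)\<close> whose multiples \<open>\<alpha>x\<close> approach the nearest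
  integer from the same side give pairwise \<open>(c/N)\<close>-separated values \<open>\<parallel>\<alpha>x\<parallel>\<close> in
  \<open>[c/(4N), 1/2]\<close>, so their reciprocal sum is a harmonic-type sum.\<close>
lemma badly_approximable_side_class_sum:
  assumes ba: "badly_approximable_with c \<alpha>" and N1: "N \<ge> 1" and TN: "T \<subseteq> {N..<2*N}"
    and \<epsilon>: "\<bar>\<epsilon>\<bar> = 1"
    and side: "\<And>x. x \<in> T \<Longrightarrow> \<exists>m. dist_int (\<alpha> * real x) = \<epsilon> * (\<alpha> * real x - of_int m)"
  shows "(\<Sum>x\<in>T. 1 / dist_int (\<alpha> * real x)) \<le> (2 + harm (nat \<lfloor>real N/(2*c)\<rfloor>)) * (real N / c)"
proof -
  define \<delta> where "\<delta> = c / real N"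
  have cpos: "c > 0" using ba by (simp add: badly_approximable_with_def)
  have dpos: "\<delta> > 0" using cpos N1 by (simp add: \<delta>_def)
  have "(\<Sum>x\<in>T. 1 / dist_int (\<alpha> * real x)) \<le> (2 + harm (nat \<lfloor>1/(2*\<delta>)\<rfloor>)) / \<delta>"
  proof (rule sum_inverse_separated[OF dpos])
    show "finite T" using TN finite_subset by blast
  next
    fix x assume xT: "x \<in> T"
    have x1: "x \<ge> 1" and x2: "x < 2*N" using xT TN N1 by auto
    have "\<delta>/2 \<le> c / real x"
      using x1 x2 cpos unfolding \<delta>_def by (simp add: frac_le)
    also have "\<dots> \<le> dist_int (\<alpha> * real x)" by (rule badly_approximable_dist_int[OF ba x1])
    finally show "\<delta>/2 \<le> dist_int (\<alpha> * real x) \<and> dist_int (\<alpha> * real x) \<le> 1/2"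
      using dist_int_le_half by simp
  next
    fix x y assume xT: "x \<in> T" and yT: "y \<in> T" and "x \<noteq> y"
    obtain m n where "dist_int (\<alpha> * real x) = \<epsilon> * (\<alpha> * real x - of_int m)"
        and "dist_int (\<alpha> * real y) = \<epsilon> * (\<alpha> * real y - of_int n)"
      using side[OF xT] side[OF yT] by blast
    then have "dist_int (\<alpha> * real x - \<alpha> * real y)
                 \<le> \<bar>dist_int (\<alpha> * real x) - dist_int (\<alpha> * real y)\<bar>"
      by (rule dist_int_diff_le[OF \<epsilon>])
    moreover have "\<delta> \<le> dist_int (\<alpha> * (real x - real y))"
      unfolding \<delta>_def using xT yT \<open>x \<noteq> y\<close> TN
      by (intro badly_approximable_block_separated[OF ba]) auto
    ultimately show "\<delta> \<le> \<bar>dist_int (\<alpha> * real x) - dist_int (\<alpha> * real y)\<bar>"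
      by (simp add: right_diff_distrib)
  qed
  also have "\<dots> = (2 + harm (nat \<lfloor>real N/(2*c)\<rfloor>)) * (real N / c)"
  proof -
    have "1/(2*\<delta>) = real N/(2*c)" using N1 by (simp add: \<delta>_def)
    then show ?thesis by (simp add: \<delta>_def)
  qed
  finally show ?thesis .
qed

text \<open>The reciprocal sum of \<open>\<parallel>\<alpha>x\<parallel>\<close> over any part of a block \<open>[N, 2N)\<close>, obtained
  by splitting it into the two side classes.\<close>
lemma badly_approximable_block_sum:
  assumes ba: "badly_approximable_with c \<alpha>" and N1: "N \<ge> 1" and SN: "S \<subseteq> {N..<2*N}"
  shows "(\<Sum>x\<in>S. 1 / dist_int (\<alpha> * real x))
           \<le> 2 * (2 + harm (nat \<lfloor>real N/(2*c)\<rfloor>)) * (real N / c)"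
proof -
  define f where "f x = 1 / dist_int (\<alpha> * real x)" for x :: nat
  define B where "B = (2 + harm (nat \<lfloor>real N/(2*c)\<rfloor>)) * (real N / c)"
  define S1 where "S1 = {x\<in>S. \<exists>m. dist_int (\<alpha> * real x) = 1 * (\<alpha> * real x - of_int m)}"
  have S1S: "S1 \<subseteq> S" by (auto simp: S1_def)
  have finS: "finite S" using SN finite_subset by blast
  have below: "\<exists>m. dist_int (\<alpha> * real x) = -1 * (\<alpha> * real x - of_int m)" if "x \<in> S - S1" for x
  proof -
    obtain \<epsilon> m where "\<epsilon> \<in> {1, -1}" and "dist_int (\<alpha> * real x) = \<epsilon> * (\<alpha> * real x - of_int m)"
      using dist_int_signed by blast
    with that show ?thesis unfolding S1_def by auto
  qed
  have "sum f S = sum f S1 + sum f (S - S1)"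
    using sum.subset_diff[OF S1S finS] by (simp add: add.commute)
  also have "\<dots> \<le> B + B"
  proof (rule add_mono)
    show "sum f S1 \<le> B" unfolding f_def B_def
      by (rule badly_approximable_side_class_sum[OF ba N1, of S1 1]) (use S1S SN in \<open>auto simp: S1_def\<close>)
    show "sum f (S - S1) \<le> B" unfolding f_def B_def
      by (rule badly_approximable_side_class_sum[OF ba N1, of "S - S1" "-1"]) (use SN below in auto)
  qed
  also have "B + B = 2 * (2 + harm (nat \<lfloor>real N/(2*c)\<rfloor>)) * (real N / c)"
    unfolding B_def by simp
  finally show ?thesis unfolding f_def .
qed

text \<open>For the block \<open>[2^k, 2^(k+1))\<close> the harmonic number is \<open>O(k)\<close>.\<close>
lemma badly_approximable_dyadic_sum:
  assumes ba: "badly_approximable_with c \<alpha>" and k1: "k \<ge> 1"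
    and SN: "S \<subseteq> {2^k..<2*2^k}"
  shows "(\<Sum>x\<in>S. 1 / dist_int (\<alpha> * real x)) \<le> (2 * (4 + ln (1/(2*c) + 1)) / c) * 2^k * real k"
proof -
  define N :: nat where "N = 2^k"
  define L where "L = ln (1/(2*c) + 1)"
  define M where "M = nat \<lfloor>real N/(2*c)\<rfloor>"
  have cpos: "c > 0" using ba by (simp add: badly_approximable_with_def)
  have L0: "L \<ge> 0" using cpos by (simp add: L_def)
  have "real M \<le> real N/(2*c)" unfolding M_def using cpos by (simp add: of_nat_nat)
  moreover have "real N \<ge> 1" by (simp add: N_def)
  ultimately have "real M + 1 \<le> real N * (1/(2*c) + 1)"
    by (simp add: field_simps)
  then have "ln (real M + 1) \<le> ln (real N * (1/(2*c) + 1))"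
    using cpos by (intro ln_mono) (auto simp: N_def)
  also have "\<dots> = real k * ln 2 + L"
    using cpos add_pos_pos[of "1/(2*c)" 1] unfolding N_def L_def by (simp add: ln_mult ln_realpow)
  also have "\<dots> \<le> real k + L" using ln_2_less_1 by (simp add: mult_left_le)
  finally have harm_M: "harm M \<le> 1 + real k + L" using harm_le_ln[of M] by linarith
  have "(\<Sum>x\<in>S. 1 / dist_int (\<alpha> * real x)) \<le> 2 * (2 + harm M) * (real N / c)"
    using badly_approximable_block_sum[OF ba _ SN] unfolding M_def N_def by simp
  also have "\<dots> \<le> 2 * ((4 + L) * real k) * (real N / c)"
  proof -
    have "2 + harm M \<le> (4 + L) * real k"
      using harm_M k1 L0 mult_left_mono[of 1 "real k" L] by (simp add: algebra_simps)
    then show ?thesis using cpos by (intro mult_right_mono mult_left_mono) auto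
  qed
  also have "\<dots> = (2 * (4 + L) / c) * 2^k * real k" by (simp add: N_def)
  finally show ?thesis by (simp add: L_def)
qed

lemma dyadic_weight_bound:
  assumes k1: "k \<ge> 1" and xk: "2^k \<le> x"
  shows "(2::real)^k * (real k)^2 \<le> real x * (log 2 (real x))^2"
proof -
  have xr: "(2::real)^k \<le> real x" using xk by (metis of_nat_le_iff of_nat_numeral of_nat_power)
  moreover have "(0::real) < 2^k" by simp
  ultimately have xpos: "0 < real x" by linarith
  have "real k = log 2 ((2::real)^k)" by (simp add: log_nat_power)
  also have "\<dots> \<le> log 2 (real x)" using xr xpos by (subst log_le_cancel_iff) auto
  finally have "real k \<le> log 2 (real x)" .
  then show ?thesis using xr xpos by (intro mult_mono power_mono) auto
qed

lemma badly_approximable_dyadic_weighted_sum: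
  assumes ba: "badly_approximable_with c \<alpha>" and k1: "k \<ge> 1"
    and F: "F \<subseteq> {2^k..<2*2^k}"
  shows "(\<Sum>x\<in>F. 1 / (dist_int (\<alpha> * real x) * real x * (log 2 (real x))^2))
           \<le> (2 * (4 + ln (1/(2*c) + 1)) / c) / real k"
proof -
  define E where "E = 2 * (4 + ln (1/(2*c) + 1)) / c"
  define W :: real where "W = 2^k * (real k)^2"
  have Wpos: "W > 0" using k1 by (simp add: W_def)
  have term_bound: "1 / (dist_int (\<alpha> * real x) * real x * (log 2 (real x))^2)
                      \<le> (1 / dist_int (\<alpha> * real x)) / W" if "x \<in> F" for x
  proof -
    have "W \<le> real x * (log 2 (real x))^2"
      unfolding W_def using F that by (intro dyadic_weight_bound k1) auto
    then have "1 / (real x * (log 2 (real x))^2) \<le> 1 / W"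
      using Wpos by (intro divide_left_mono) auto
    then have "(1 / dist_int (\<alpha> * real x)) * (1 / (real x * (log 2 (real x))^2))
                 \<le> (1 / dist_int (\<alpha> * real x)) * (1 / W)"
      by (rule mult_left_mono) (simp add: dist_int_nonneg)
    then show ?thesis by (simp add: mult.assoc)
  qed
  have "(\<Sum>x\<in>F. 1 / (dist_int (\<alpha> * real x) * real x * (log 2 (real x))^2))
          \<le> (\<Sum>x\<in>F. 1 / dist_int (\<alpha> * real x)) / W"
    using term_bound by (simp add: sum_divide_distrib sum_mono)
  also have "\<dots> \<le> (E * 2^k * real k) / W"
    using badly_approximable_dyadic_sum[OF ba k1 F] Wpos unfolding E_def
    by (intro divide_right_mono) auto
  also have "\<dots> = E / real k" using k1 by (simp add: W_def power2_eq_square)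
  finally show ?thesis by (simp add: E_def)
qed

lemma floor_log_cube_range:
  assumes "1 \<le> q" and "q \<le> x" and "x \<le> q^3"
  shows "floor_log q \<le> floor_log x \<and> floor_log x \<le> 3 * floor_log q + 2"
proof
  show "floor_log q \<le> floor_log x" using assms(2) by (rule floor_log_le_iff)
  have "(2::nat) ^ floor_log x \<le> x" using assms by (intro floor_log_exp2_le) auto
  also have "x < (2 * 2 ^ floor_log q)^3"
    using assms floor_log_exp2_gt[of q] by (intro le_less_trans[OF assms(3)] power_strict_mono) auto
  also have "\<dots> = 2 ^ (3 * floor_log q + 3)"
    by (simp add: power_mult_distrib power_mult[symmetric] power_add algebra_simps)
  finally show "floor_log x \<le> 3 * floor_log q + 2" by simp
qed

lemma sum_cube_range_dyadic:
  fixes h :: "nat \<Rightarrow> real"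
  assumes E: "E \<ge> 0" and q2: "q \<ge> 2"
    and block: "\<And>k F. k \<ge> 1 \<Longrightarrow> F \<subseteq> {2^k..<2*2^k} \<Longrightarrow> sum h F \<le> E / real k"
  shows "(\<Sum>x=q..q^3. h x) \<le> 5 * E"
proof -
  define K where "K = floor_log q"
  define T where "T = {K..3*K+2}"
  define S where "S = {q..q^3}"
  have "floor_log (2^1::nat) = 1" by (rule floor_log_power)
  then have K1: "K \<ge> 1" using floor_log_le_iff[OF q2] by (simp add: K_def)
  have "floor_log ` S \<subseteq> T"
  proof
    fix j assume "j \<in> floor_log ` S"
    then obtain x where "x \<in> S" and "j = floor_log x" by blast
    then show "j \<in> T" using floor_log_cube_range[of q x] q2 by (simp add: S_def T_def K_def)
  qed
  then have "sum h S = (\<Sum>k\<in>T. sum h {x\<in>S. floor_log x = k})"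
    by (intro sum.group[symmetric]) (simp_all add: S_def T_def)
  also have "\<dots> \<le> (\<Sum>k\<in>T. E / real K)"
  proof (rule sum_mono)
    fix k assume kT: "k \<in> T"
    then have k1: "k \<ge> 1" using K1 by (simp add: T_def)
    have "{x\<in>S. floor_log x = k} \<subseteq> {2^k..<2*2^k}"
    proof
      fix x assume "x \<in> {x\<in>S. floor_log x = k}"
      then have "0 < x" and "floor_log x = k" using q2 by (auto simp: S_def)
      then show "x \<in> {2^k..<2*2^k}"
        using floor_log_exp2_le[of x] floor_log_exp2_gt[of x] by simp
    qed
    then have "sum h {x\<in>S. floor_log x = k} \<le> E / real k" by (rule block[OF k1])
    also have "\<dots> \<le> E / real K" using kT K1 E by (intro divide_left_mono) (simp_all add: T_def)
    finally show "sum h {x\<in>S. floor_log x = k} \<le> E / real K" .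
  qed
  also have "\<dots> = real (2*K+3) * (E / real K)" by (simp add: T_def)
  also have "\<dots> \<le> (5 * real K) * (E / real K)"
    using K1 E by (intro mult_right_mono) simp_all
  also have "\<dots> = 5 * E" using K1 by simp
  finally show ?thesis by (simp add: S_def)
qed

theorem lemma2:
  fixes \<alpha> :: real
  assumes "(INF q\<in>{1::nat..}. real q * dist_int (real q * \<alpha>)) > 0"
  shows "\<exists>C>0. \<forall>q::nat. q \<ge> 2 \<longrightarrow>
           (\<Sum>x=q..q^3. 1 / (dist_int (\<alpha> * real x) * real x * (log 2 (real x))^2)) \<le> C"
proof -
  define c where "c = (INF q\<in>{1::nat..}. real q * dist_int (real q * \<alpha>))"
  have ba: "badly_approximable_with c \<alpha>"
    unfolding c_def using assms by (rule badly_approximable_withI)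
  then have cpos: "c > 0" by (simp add: badly_approximable_with_def)
  define E where "E = 2 * (4 + ln (1/(2*c) + 1)) / c"
  have Epos: "E > 0"
    using cpos by (simp add: E_def add_pos_nonneg)
  have "\<forall>q\<ge>2. (\<Sum>x=q..q^3. 1 / (dist_int (\<alpha> * real x) * real x * (log 2 (real x))^2)) \<le> 5 * E"
    using Epos badly_approximable_dyadic_weighted_sum[OF ba]
    by (intro allI impI sum_cube_range_dyadic) (auto simp: E_def)
  then show ?thesis using Epos by (intro exI[of _ "5 * E"]) auto
qed

end
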